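(* For every $n\ge 0$ and every integer $r\ge 1$, $\mathbf{P}[M_n=r]\le \mu^n p_r$. If moreover $p$ is unbounded, then as $r\to\infty$, $$\mathbf{P}[M_n=r]\sim \mu^n p_r\quad\text{and}\quad \mathbf{P}[M_n>r]\sim \mu^n\bar F(r),$$ where the first asymptotic equivalence is understood along the infinite set $\{r: p_r>0\}$ (i.e. $\mathbf{P}[M_n=r]/p_r\to\mu^n$ as $r\to\infty$ with $p_r>0$).
   Context: Let $p=(p_0,p_1,p_2,\dots)$ be a probability distribution on the nonnegative integers with mean $\mu=\sum_k kp_k\in(0,\infty)$, and let $\tau(p)$ be a Galton–Watson tree with offspring distribution $p$: it starts with a single root at generation $0$, and every vertex independently has $k$ children with probability $p_k$. The out-degree of a vertex is its number of children. $M_n$ denotes the maximal out-degree among the vertices of generation $n$ (with $M_n=0$ if generation $n$ is empty). $\bar F(r)=\sum_{k>r}p_k$. The distribution $p$ is called unbounded if the set $\{r:p_r>0\}$ is unbounded. *)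

theory Defs
  imports "HOL-Probability.Probability" "HOL-Library.Landau_Symbols"
begin

text \<open>Ulam--Harris encoding of a Galton--Watson tree: every potential vertex
 (a finite list of child indices) carries an independent offspring number with
 law p; a realisation is a function xi from vertices to out-degrees.\<close>

definition GW_offspring :: "nat pmf \<Rightarrow> (nat list \<Rightarrow> nat) measure" where
  "GW_offspring p = PiM UNIV (\<lambda>_::nat list. measure_pmf p)"

fun gen :: "(nat list \<Rightarrow> nat) \<Rightarrow> nat \<Rightarrow> nat list set" where
  "gen xi 0 = {[]}"
| "gen xi (Suc n) = {v @ [i] | v i. v \<in> gen xi n \<and> i < xi v}"

definition maxdeg :: "(nat list \<Rightarrow> nat) \<Rightarrow> nat \<Rightarrow> nat" where
  "maxdeg xi n = (if gen xi n = {} then 0 else Max (xi ` gen xi n))"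

definition offspring_mean :: "nat pmf \<Rightarrow> real" where
  "offspring_mean p = (\<Sum>k. real k * pmf p k)"

definition Fbar :: "nat pmf \<Rightarrow> nat \<Rightarrow> real" where
  "Fbar p r = measure_pmf.prob p {r<..}"

end

theory Submission
  imports Defs
begin

text \<open>
  Let \<open>Z\<^sub>n\<close> be the size of generation \<open>n\<close>. Given that generation \<open>n\<close> is a fixed finite set
  \<open>S\<close>, the out-degrees of the vertices of \<open>S\<close> are still i.i.d. with law \<open>p\<close>, because that event
  only involves vertices of smaller height. Hence \<open>P[Z\<^sub>n = z, M\<^sub>n \<le> r] = P[Z\<^sub>n = z] F(r)\<^sup>z\<close>
  with \<open>F\<close> the distribution function of \<open>p\<close>, i.e. \<open>P[M\<^sub>n \<le> r] = G(F(r))\<close> for the generating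
  function \<open>G\<close> of \<open>Z\<^sub>n\<close>. So \<open>P[M\<^sub>n = r] = G(F(r)) - G(F(r - 1))\<close> with \<open>F(r) - F(r - 1) = p\<^sub>r\<close>,
  and \<open>P[M\<^sub>n > r] = G(1) - G(F(r))\<close> with \<open>1 - F(r) = Fbar p r\<close>. The difference quotients of \<open>G\<close>
  on \<open>[0, 1]\<close> are bounded by \<open>G'(1) = E Z\<^sub>n = \<mu>\<^sup>n\<close>, and converge to it as both points tend
  to \<open>1\<close>, which they do along \<open>r \<rightarrow> \<infinity>\<close>.
\<close>

section \<open>Generations\<close>

definition children :: "(nat list \<Rightarrow> nat) \<Rightarrow> nat list set \<Rightarrow> nat list set" where
  "children xi S = (\<Union>v\<in>S. (\<lambda>i. v @ [i]) ` {..<xi v})"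

lemma gen_Suc_children: "gen xi (Suc n) = children xi (gen xi n)"
  unfolding children_def by auto

declare gen.simps(2) [simp del]

lemma length_gen: "v \<in> gen xi n \<Longrightarrow> length v = n"
  by (induction n arbitrary: v) (auto simp: gen_Suc_children children_def)

lemma finite_children: "finite S \<Longrightarrow> finite (children xi S)"
  unfolding children_def by auto

lemma finite_gen: "finite (gen xi n)"
  by (induction n) (simp_all add: gen_Suc_children finite_children)

lemma card_children: "finite S \<Longrightarrow> card (children xi S) = (\<Sum>v\<in>S. xi v)"
  unfolding children_def
  by (subst card_UN_disjoint) (auto simp: card_image inj_on_def)

lemma children_eq_iff:
  "children xi S = T \<longleftrightarrow>
     T \<subseteq> (\<Union>v\<in>S. range (\<lambda>i. v @ [i])) \<and> (\<forall>v\<in>S. \<forall>i. v @ [i] \<in> T \<longleftrightarrow> i < xi v)"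
  unfolding children_def by blast

lemma gen_cong: "(\<And>v. length v < n \<Longrightarrow> xi v = xi' v) \<Longrightarrow> gen xi n = gen xi' n"
proof (induction n)
  case (Suc n)
  then have "gen xi n = gen xi' n" by simp
  moreover have "xi v = xi' v" if "v \<in> gen xi n" for v
    using Suc.prems length_gen[OF that] by simp
  ultimately show ?case by (auto simp: gen_Suc_children children_def)
qed simp

lemma maxdeg_le_iff: "maxdeg xi n \<le> r \<longleftrightarrow> (\<forall>v\<in>gen xi n. xi v \<le> r)"
  unfolding maxdeg_def using finite_gen[of xi n] by auto

definition gen_values :: "nat \<Rightarrow> nat list set set" where
  "gen_values n = {S. finite S \<and> S \<subseteq> {v. length v = n}}"

lemma countable_gen_values: "countable (gen_values n)"
  unfolding gen_values_def by (rule countable_Collect_finite_subset) simp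

lemma gen_in_gen_values: "gen xi n \<in> gen_values n"
  unfolding gen_values_def using finite_gen length_gen by auto

section \<open>The Galton--Watson measure\<close>

lemma sets_PiM_pmf_coord:
  assumes "v \<in> A"
  shows "{f \<in> space (PiM A (\<lambda>_. measure_pmf p)). Q (f v)} \<in> sets (PiM A (\<lambda>_. measure_pmf p))"
  using measurable_sets[OF measurable_component_singleton[OF assms], of "{x. Q x}" "\<lambda>_. measure_pmf p"]
  by (simp add: vimage_def Int_def conj_commute)

lemma sets_PiM_pmf_children_eq:
  assumes "finite S" "S \<subseteq> A"
  shows "{f \<in> space (PiM A (\<lambda>_. measure_pmf p)). children f S = T} \<in> sets (PiM A (\<lambda>_. measure_pmf p))"
proof -
  let ?M = "PiM A (\<lambda>_. measure_pmf p)"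
  have "{f \<in> space ?M. children f S = T} =
     (if T \<subseteq> (\<Union>v\<in>S. range (\<lambda>i. v @ [i])) then space ?M else {}) -
     (\<Union>v\<in>S. \<Union>i. {f \<in> space ?M. (v @ [i] \<in> T) \<noteq> (i < f v)})"
    unfolding children_eq_iff by auto
  also have "\<dots> \<in> sets ?M"
    using assms by (intro sets.Diff sets.countable_UN'') (auto intro!: sets_PiM_pmf_coord)
  finally show ?thesis .
qed

text \<open>Generation \<open>n\<close> is measurable for products over any \<open>A\<close> containing the vertices of
  height below \<open>n\<close>; the independence argument below needs such proper subsets \<open>A\<close>.\<close>

lemma sets_PiM_pmf_gen_eq:
  assumes "{v. length v < n} \<subseteq> A"
  shows "{f \<in> space (PiM A (\<lambda>_. measure_pmf p)). gen f n = T} \<in> sets (PiM A (\<lambda>_. measure_pmf p))"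
  using assms
proof (induction n arbitrary: T)
  case 0
  then show ?case by (cases "T = {[]}") auto
next
  case (Suc n)
  let ?M = "PiM A (\<lambda>_. measure_pmf p)"
  have "{f \<in> space ?M. gen f (Suc n) = T} =
      (\<Union>S\<in>gen_values n. {f \<in> space ?M. gen f n = S} \<inter> {f \<in> space ?M. children f S = T})"
    using gen_in_gen_values by (auto simp: gen_Suc_children)
  also have "\<dots> \<in> sets ?M"
    using Suc.prems countable_gen_values
    by (intro sets.countable_UN'' sets.Int sets_PiM_pmf_children_eq Suc.IH)
       (auto simp: gen_values_def)
  finally show ?case .
qed

lemma space_GW_offspring [simp]: "space (GW_offspring p) = UNIV"
  by (auto simp: GW_offspring_def space_PiM)

lemma sets_GW_offspring_UNIV [simp]: "UNIV \<in> sets (GW_offspring p)"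
  using sets.top[of "GW_offspring p"] by simp

lemma prob_space_GW_offspring: "prob_space (GW_offspring p)"
  unfolding GW_offspring_def by (intro prob_space_PiM measure_pmf.prob_space_axioms)

lemma sets_GW_offspring_coord: "{\<omega>. Q (\<omega> v)} \<in> sets (GW_offspring p)"
  using sets_PiM_pmf_coord[of v UNIV p Q] by (simp add: GW_offspring_def space_PiM)

lemma sets_GW_offspring_coords:
  assumes "finite S"
  shows "{\<omega>. \<forall>v\<in>S. Q v (\<omega> v)} \<in> sets (GW_offspring p)"
proof -
  have "{\<omega>. \<forall>v\<in>S. Q v (\<omega> v)} = UNIV - (\<Union>v\<in>S. {\<omega>. \<not> Q v (\<omega> v)})" by auto
  also have "\<dots> \<in> sets (GW_offspring p)"
    using assms by (intro sets.Diff sets.countable_UN'' countable_finite sets_GW_offspring_coord) auto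
  finally show ?thesis .
qed

lemma sets_GW_offspring_gen_eq: "{\<omega>. gen \<omega> n = S} \<in> sets (GW_offspring p)"
  using sets_PiM_pmf_gen_eq[of n UNIV p S] by (simp add: GW_offspring_def space_PiM)

lemma distr_GW_offspring_coord: "distr (GW_offspring p) (measure_pmf p) (\<lambda>\<omega>. \<omega> v) = measure_pmf p"
  unfolding GW_offspring_def
  by (rule product_prob_space.PiM_component)
     (auto intro: product_prob_spaceI measure_pmf.prob_space_axioms)

lemma measure_GW_offspring_coord: "measure (GW_offspring p) {\<omega>. \<omega> v \<in> B} = measure p B"
proof -
  have "measure p B = measure (distr (GW_offspring p) (measure_pmf p) (\<lambda>\<omega>. \<omega> v)) B"
    by (simp add: distr_GW_offspring_coord)
  also have "\<dots> = measure (GW_offspring p) ((\<lambda>\<omega>. \<omega> v) -` B \<inter> space (GW_offspring p))"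
    by (rule measure_distr) (auto simp: GW_offspring_def)
  finally show ?thesis by (simp add: vimage_def)
qed

lemma indep_vars_GW_offspring_coords:
  "prob_space.indep_vars (GW_offspring p) (\<lambda>_. measure_pmf p) (\<lambda>v \<omega>. \<omega> v) UNIV"
proof -
  interpret prob_space "GW_offspring p" by (rule prob_space_GW_offspring)
  have rv: "random_variable (measure_pmf p) (\<lambda>\<omega>. \<omega> v)" for v
    unfolding GW_offspring_def by (rule measurable_component_singleton) simp
  have "(\<lambda>\<omega>. restrict \<omega> UNIV) = (\<lambda>\<omega>::nat list \<Rightarrow> nat. \<omega>)" by (auto simp: restrict_def)
  then show ?thesis
    by (subst indep_vars_iff_distr_eq_PiM[OF _ rv])
       (simp_all only: distr_GW_offspring_coord, simp_all add: GW_offspring_def distr_id2)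
qed

lemma measure_gen_eq_coords_in:
  assumes S: "finite S" "S \<subseteq> {v. length v = n}"
  shows "measure (GW_offspring p) ({\<omega>. gen \<omega> n = S} \<inter> {\<omega>. \<forall>v\<in>S. \<omega> v \<in> B v})
     = measure (GW_offspring p) {\<omega>. gen \<omega> n = S} * (\<Prod>v\<in>S. measure p (B v))"
proof -
  interpret prob_space "GW_offspring p" by (rule prob_space_GW_offspring)
  \<comment> \<open>Independent blocks of coordinates: \<open>None\<close> gets all heights below \<open>n\<close>, \<open>Some v\<close> the vertex \<open>v\<close>.\<close>
  define A where "A = {v::nat list. length v < n}"
  define K where "K = case_option A (\<lambda>v. {v})"
  define L where "L = insert None (Some ` S)"
  define E where "E = case_option {g \<in> space (PiM A (\<lambda>_. measure_pmf p)). gen g n = S}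
                      (\<lambda>v. {g \<in> space (PiM {v} (\<lambda>_. measure_pmf p)). g v \<in> B v})"
  let ?X = "\<lambda>j \<omega>. restrict \<omega> (K j)"
  have "disjoint_family_on K L"
    using S unfolding disjoint_family_on_def K_def L_def A_def by (auto split: option.splits)
  then have indep: "indep_vars (\<lambda>j. PiM (K j) (\<lambda>_. measure_pmf p)) ?X L"
    by (intro indep_vars_restrict[OF indep_vars_GW_offspring_coords]) simp
  have E: "E j \<in> sets (PiM (K j) (\<lambda>_. measure_pmf p))" for j
    by (cases j) (auto simp: E_def K_def A_def intro!: sets_PiM_pmf_gen_eq sets_PiM_pmf_coord)
  have "gen (restrict \<omega> A) n = gen \<omega> n" for \<omega>
    by (rule gen_cong) (auto simp: A_def)
  then have None: "?X None -` E None = {\<omega>. gen \<omega> n = S}"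
    by (auto simp: K_def E_def space_PiM)
  have Some: "?X (Some v) -` E (Some v) = {\<omega>. \<omega> v \<in> B v}" for v
    by (auto simp: K_def E_def space_PiM)
  have "prob (\<Inter>j\<in>L. ?X j -` E j \<inter> space (GW_offspring p)) =
        (\<Prod>j\<in>L. prob (?X j -` E j \<inter> space (GW_offspring p)))"
    using S by (intro indep_varsD[OF indep]) (auto simp: L_def E)
  moreover have "(\<Inter>j\<in>L. ?X j -` E j \<inter> space (GW_offspring p))
      = {\<omega>. gen \<omega> n = S} \<inter> {\<omega>. \<forall>v\<in>S. \<omega> v \<in> B v}"
    unfolding L_def using None Some by auto
  ultimately show ?thesis
    using S None Some by (simp add: L_def prod.reindex measure_GW_offspring_coord)
qed

lemma gen_pred_eq_UN:
  "{\<omega>. Q (gen \<omega> n) \<omega>} = (\<Union>S\<in>gen_values n. {\<omega>. gen \<omega> n = S} \<inter> {\<omega>. Q S \<omega>})"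
  using gen_in_gen_values by auto

lemma sets_GW_offspring_gen_pred:
  assumes "\<And>S. S \<in> gen_values n \<Longrightarrow> {\<omega>. Q S \<omega>} \<in> sets (GW_offspring p)"
  shows "{\<omega>. Q (gen \<omega> n) \<omega>} \<in> sets (GW_offspring p)"
  unfolding gen_pred_eq_UN using assms countable_gen_values
  by (intro sets.countable_UN'' sets.Int sets_GW_offspring_gen_eq) auto

lemma emeasure_GW_offspring_gen_pred:
  assumes "\<And>S. S \<in> gen_values n \<Longrightarrow> {\<omega>. Q S \<omega>} \<in> sets (GW_offspring p)"
  shows "emeasure (GW_offspring p) {\<omega>. Q (gen \<omega> n) \<omega>} =
    (\<integral>\<^sup>+S. emeasure (GW_offspring p) ({\<omega>. gen \<omega> n = S} \<inter> {\<omega>. Q S \<omega>}) \<partial>count_space (gen_values n))"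
  unfolding gen_pred_eq_UN using assms countable_gen_values
  by (intro emeasure_UN_countable)
     (auto intro!: sets.Int sets_GW_offspring_gen_eq simp: disjoint_family_on_def)

lemma nn_integral_GW_offspring_gen_split:
  assumes f: "f \<in> borel_measurable (GW_offspring p)"
  shows "(\<integral>\<^sup>+\<omega>. f \<omega> \<partial>GW_offspring p) =
    (\<integral>\<^sup>+S. (\<integral>\<^sup>+\<omega>. f \<omega> * indicator {\<omega>. gen \<omega> n = S} \<omega> \<partial>GW_offspring p) \<partial>count_space (gen_values n))"
proof -
  have "f \<omega> = (\<integral>\<^sup>+S. f \<omega> * indicator {\<omega>. gen \<omega> n = S} \<omega> \<partial>count_space (gen_values n))" for \<omega>
  proof -
    have "(\<integral>\<^sup>+S. f \<omega> * indicator {\<omega>. gen \<omega> n = S} \<omega> \<partial>count_space (gen_values n))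
        = f \<omega> * (\<integral>\<^sup>+S. of_bool (gen \<omega> n = S) \<partial>count_space (gen_values n))"
      by (subst nn_integral_cmult[symmetric]) (auto simp: indicator_def intro!: nn_integral_cong)
    also have "(\<integral>\<^sup>+S. of_bool (gen \<omega> n = S) \<partial>count_space (gen_values n)) = 1"
      using of_bool_Bex_eq_nn_integral[of "gen_values n" "\<lambda>S. gen \<omega> n = S"] gen_in_gen_values
      by auto
    finally show ?thesis by simp
  qed
  then have "(\<integral>\<^sup>+\<omega>. f \<omega> \<partial>GW_offspring p) =
     (\<integral>\<^sup>+\<omega>. (\<integral>\<^sup>+S. f \<omega> * indicator {\<omega>. gen \<omega> n = S} \<omega> \<partial>count_space (gen_values n)) \<partial>GW_offspring p)"
    by simp
  also have "\<dots> = (\<integral>\<^sup>+S. (\<integral>\<^sup>+\<omega>. f \<omega> * indicator {\<omega>. gen \<omega> n = S} \<omega> \<partial>GW_offspring p) \<partial>count_space (gen_values n))"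
    using countable_gen_values f sets_GW_offspring_gen_eq
    by (intro nn_integral_count_space_nn_integral) auto
  finally show ?thesis .
qed

lemma sets_GW_offspring_card_gen_eq: "{\<omega>. card (gen \<omega> n) = z} \<in> sets (GW_offspring p)"
  by (intro sets_GW_offspring_gen_pred[where Q = "\<lambda>S \<omega>. card S = z"]) (cases "card S = z"; simp)

lemma sets_GW_offspring_maxdeg_le: "{\<omega>. maxdeg \<omega> n \<le> r} \<in> sets (GW_offspring p)"
  unfolding maxdeg_le_iff
  by (intro sets_GW_offspring_gen_pred[where Q = "\<lambda>S \<omega>. \<forall>v\<in>S. \<omega> v \<le> r"] sets_GW_offspring_coords)
     (simp add: gen_values_def)

section \<open>Expected generation sizes\<close>

lemma borel_measurable_nat_valued:
  fixes h :: "'a \<Rightarrow> nat"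
  assumes "\<And>k. {x \<in> space M. h x = k} \<in> sets M"
  shows "(\<lambda>x. f (h x)) \<in> borel_measurable M"
proof (rule measurable_compose[of h _ "count_space UNIV"])
  show "h \<in> M \<rightarrow>\<^sub>M count_space UNIV"
    using assms by (auto simp: measurable_count_space_eq2_countable vimage_def Int_def conj_commute)
qed simp

lemma nn_integral_nat_valued:
  fixes h :: "'a \<Rightarrow> nat"
  assumes h: "\<And>k. {x \<in> space M. h x = k} \<in> sets M" and E: "E \<in> sets M"
  shows "(\<integral>\<^sup>+x. f (h x) * indicator E x \<partial>M) = (\<Sum>k. f k * emeasure M (E \<inter> {x. h x = k}))"
proof -
  have sets: "E \<inter> {x. h x = k} \<in> sets M" for k
  proof -
    have "E \<inter> {x. h x = k} = E \<inter> {x \<in> space M. h x = k}"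
      using sets.sets_into_space[OF E] by blast
    then show ?thesis using E h by simp
  qed
  have "f (h x) * indicator E x = (\<Sum>k. f k * indicator (E \<inter> {x. h x = k}) x)" for x
  proof -
    have "(\<lambda>k. f k * indicator (E \<inter> {x. h x = k}) x) = (\<lambda>k. if k = h x then f k * indicator E x else 0)"
      by (auto simp: indicator_def)
    then show ?thesis using sums_single[of "h x" "\<lambda>k. f k * indicator E x"] sums_unique by metis
  qed
  then have "(\<integral>\<^sup>+x. f (h x) * indicator E x \<partial>M) = (\<integral>\<^sup>+x. (\<Sum>k. f k * indicator (E \<inter> {x. h x = k}) x) \<partial>M)"
    by simp
  also have "\<dots> = (\<Sum>k. \<integral>\<^sup>+x. f k * indicator (E \<inter> {x. h x = k}) x \<partial>M)"
    using sets by (intro nn_integral_suminf) auto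
  also have "\<dots> = (\<Sum>k. f k * emeasure M (E \<inter> {x. h x = k}))"
    using sets by (intro suminf_cong nn_integral_cmult_indicator)
  finally show ?thesis .
qed

lemma offspring_mean_nonneg: "summable (\<lambda>k. real k * pmf p k) \<Longrightarrow> 0 \<le> offspring_mean p"
  unfolding offspring_mean_def by (intro suminf_nonneg) auto

lemma suminf_ennreal_offspring_mean:
  assumes "summable (\<lambda>k. real k * pmf p k)"
  shows "(\<Sum>k. ennreal (real k * pmf p k)) = ennreal (offspring_mean p)"
proof -
  have "(\<lambda>k. ennreal (real k * pmf p k)) sums ennreal (offspring_mean p)"
    using summable_sums[OF assms]
    by (subst sums_ennreal) (auto simp: offspring_mean_def intro!: suminf_nonneg assms)
  then show ?thesis by (rule sums_unique[symmetric])
qed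

lemma nn_integral_coord_gen_eq:
  assumes mean: "summable (\<lambda>k. real k * pmf p k)" and S: "S \<in> gen_values n" "v \<in> S"
  shows "(\<integral>\<^sup>+\<omega>. of_nat (\<omega> v) * indicator {\<omega>. gen \<omega> n = S} \<omega> \<partial>GW_offspring p)
    = ennreal (offspring_mean p) * emeasure (GW_offspring p) {\<omega>. gen \<omega> n = S}"
proof -
  interpret prob_space "GW_offspring p" by (rule prob_space_GW_offspring)
  let ?m = "measure (GW_offspring p) {\<omega>. gen \<omega> n = S}"
  have coord: "emeasure (GW_offspring p) ({\<omega>. gen \<omega> n = S} \<inter> {\<omega>. \<omega> v = k}) = ennreal (?m * pmf p k)"
    for k
  proof -
    define B where "B w = (if w = v then {k} else UNIV)" for w
    have "{\<omega>. \<forall>w\<in>S. \<omega> w \<in> B w} = {\<omega>. \<omega> v = k}"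
      using S(2) by (auto simp: B_def)
    moreover have "(\<Prod>w\<in>S. measure p (B w)) = (\<Prod>w\<in>S. if w = v then pmf p k else 1)"
      by (intro prod.cong) (auto simp: B_def measure_pmf_single)
    then have "(\<Prod>w\<in>S. measure p (B w)) = pmf p k"
      using S by (simp add: prod.delta' gen_values_def)
    ultimately show ?thesis
      using measure_gen_eq_coords_in[of S n p B] S by (simp add: emeasure_eq_measure gen_values_def)
  qed
  have "(\<integral>\<^sup>+\<omega>. of_nat (\<omega> v) * indicator {\<omega>. gen \<omega> n = S} \<omega> \<partial>GW_offspring p)
      = (\<Sum>k. of_nat k * emeasure (GW_offspring p) ({\<omega>. gen \<omega> n = S} \<inter> {\<omega>. \<omega> v = k}))"
    by (rule nn_integral_nat_valued) (auto intro: sets_GW_offspring_coord sets_GW_offspring_gen_eq)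
  also have "\<dots> = (\<Sum>k. ennreal ?m * ennreal (real k * pmf p k))"
    by (simp add: coord ennreal_of_nat_eq_real_of_nat ennreal_mult'[symmetric] mult_ac)
  also have "\<dots> = ennreal (offspring_mean p) * emeasure (GW_offspring p) {\<omega>. gen \<omega> n = S}"
    by (simp add: suminf_ennreal_offspring_mean[OF mean] emeasure_eq_measure mult_ac)
  finally show ?thesis .
qed

lemma nn_integral_card_gen_Suc_on_gen_eq:
  assumes mean: "summable (\<lambda>k. real k * pmf p k)" and S: "S \<in> gen_values n"
  shows "(\<integral>\<^sup>+\<omega>. of_nat (card (gen \<omega> (Suc n))) * indicator {\<omega>. gen \<omega> n = S} \<omega> \<partial>GW_offspring p)
    = ennreal (offspring_mean p) *
      (\<integral>\<^sup>+\<omega>. of_nat (card (gen \<omega> n)) * indicator {\<omega>. gen \<omega> n = S} \<omega> \<partial>GW_offspring p)"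
proof -
  have fin: "finite S" using S by (simp add: gen_values_def)
  have "(\<integral>\<^sup>+\<omega>. of_nat (card (gen \<omega> (Suc n))) * indicator {\<omega>. gen \<omega> n = S} \<omega> \<partial>GW_offspring p)
      = (\<integral>\<^sup>+\<omega>. (\<Sum>v\<in>S. of_nat (\<omega> v) * indicator {\<omega>. gen \<omega> n = S} \<omega>) \<partial>GW_offspring p)"
    using fin by (intro nn_integral_cong) (auto simp: gen_Suc_children card_children indicator_def)
  also have "\<dots> = (\<Sum>v\<in>S. \<integral>\<^sup>+\<omega>. of_nat (\<omega> v) * indicator {\<omega>. gen \<omega> n = S} \<omega> \<partial>GW_offspring p)"
    by (intro nn_integral_sum borel_measurable_times_ennreal borel_measurable_indicator
        borel_measurable_nat_valued) (auto intro: sets_GW_offspring_coord sets_GW_offspring_gen_eq)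
  also have "\<dots> = (\<Sum>v\<in>S. ennreal (offspring_mean p) * emeasure (GW_offspring p) {\<omega>. gen \<omega> n = S})"
    using S by (intro sum.cong refl nn_integral_coord_gen_eq[OF mean])
  also have "\<dots> = ennreal (offspring_mean p) * (of_nat (card S) * emeasure (GW_offspring p) {\<omega>. gen \<omega> n = S})"
    by (simp only: sum_constant mult.left_commute)
  also have "of_nat (card S) * emeasure (GW_offspring p) {\<omega>. gen \<omega> n = S}
      = (\<integral>\<^sup>+\<omega>. of_nat (card (gen \<omega> n)) * indicator {\<omega>. gen \<omega> n = S} \<omega> \<partial>GW_offspring p)"
    by (subst nn_integral_cmult_indicator[symmetric, OF sets_GW_offspring_gen_eq])
       (auto intro!: nn_integral_cong simp: indicator_def)
  finally show ?thesis .
qed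

lemma nn_integral_card_gen:
  assumes mean: "summable (\<lambda>k. real k * pmf p k)"
  shows "(\<integral>\<^sup>+\<omega>. of_nat (card (gen \<omega> n)) \<partial>GW_offspring p) = ennreal (offspring_mean p ^ n)"
proof (induction n)
  case 0
  interpret prob_space "GW_offspring p" by (rule prob_space_GW_offspring)
  show ?case using emeasure_space_1 by simp
next
  case (Suc n)
  let ?Z = "\<lambda>m \<omega>. of_nat (card (gen \<omega> m)) :: ennreal"
  have Z: "?Z m \<in> borel_measurable (GW_offspring p)" for m
    by (rule borel_measurable_nat_valued[where h = "\<lambda>\<omega>. card (gen \<omega> m)"])
       (simp add: sets_GW_offspring_card_gen_eq)
  have "(\<integral>\<^sup>+\<omega>. ?Z (Suc n) \<omega> \<partial>GW_offspring p)
      = (\<integral>\<^sup>+S. (\<integral>\<^sup>+\<omega>. ?Z (Suc n) \<omega> * indicator {\<omega>. gen \<omega> n = S} \<omega> \<partial>GW_offspring p)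
           \<partial>count_space (gen_values n))"
    by (rule nn_integral_GW_offspring_gen_split[OF Z])
  also have "\<dots> = (\<integral>\<^sup>+S. ennreal (offspring_mean p) *
           (\<integral>\<^sup>+\<omega>. ?Z n \<omega> * indicator {\<omega>. gen \<omega> n = S} \<omega> \<partial>GW_offspring p) \<partial>count_space (gen_values n))"
    by (intro nn_integral_cong nn_integral_card_gen_Suc_on_gen_eq[OF mean]) simp
  also have "\<dots> = ennreal (offspring_mean p) * (\<integral>\<^sup>+\<omega>. ?Z n \<omega> \<partial>GW_offspring p)"
    using nn_integral_GW_offspring_gen_split[OF Z, of n] by (simp add: nn_integral_cmult)
  also have "\<dots> = ennreal (offspring_mean p ^ Suc n)"
    using offspring_mean_nonneg[OF mean] by (simp add: Suc.IH ennreal_mult)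
  finally show ?case .
qed

lemma sums_card_gen_prob:
  assumes mean: "summable (\<lambda>k. real k * pmf p k)"
  shows "(\<lambda>z. real z * measure (GW_offspring p) {\<omega>. card (gen \<omega> n) = z}) sums offspring_mean p ^ n"
proof -
  interpret prob_space "GW_offspring p" by (rule prob_space_GW_offspring)
  have summand: "of_nat z * emeasure (GW_offspring p) (UNIV \<inter> {\<omega>. card (gen \<omega> n) = z})
      = ennreal (real z * measure (GW_offspring p) {\<omega>. card (gen \<omega> n) = z})" for z
    by (simp add: emeasure_eq_measure ennreal_of_nat_eq_real_of_nat ennreal_mult)
  have "ennreal (offspring_mean p ^ n) = (\<integral>\<^sup>+\<omega>. of_nat (card (gen \<omega> n)) * indicator UNIV \<omega> \<partial>GW_offspring p)"
    using nn_integral_card_gen[OF mean, of n] by simp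
  also have "\<dots> = (\<Sum>z. ennreal (real z * measure (GW_offspring p) {\<omega>. card (gen \<omega> n) = z}))"
    unfolding summand[symmetric]
    by (rule nn_integral_nat_valued) (auto intro: sets_GW_offspring_card_gen_eq)
  finally have "(\<lambda>z. ennreal (real z * measure (GW_offspring p) {\<omega>. card (gen \<omega> n) = z}))
      sums ennreal (offspring_mean p ^ n)"
    by (simp add: sums_iff summableI)
  then show ?thesis using offspring_mean_nonneg[OF mean] by (subst (asm) sums_ennreal) auto
qed

section \<open>The law of the maximal out-degree\<close>

lemma (in prob_space) sums_prob_nat_partition:
  fixes h :: "'a \<Rightarrow> nat"
  assumes "\<And>z. {\<omega> \<in> space M. h \<omega> = z \<and> P \<omega>} \<in> events"
  shows "(\<lambda>z. prob {\<omega> \<in> space M. h \<omega> = z \<and> P \<omega>}) sums prob {\<omega> \<in> space M. P \<omega>}"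
proof -
  have "(\<lambda>z. prob {\<omega> \<in> space M. h \<omega> = z \<and> P \<omega>}) sums prob (\<Union>z. {\<omega> \<in> space M. h \<omega> = z \<and> P \<omega>})"
    using assms by (intro finite_measure_UNION) (auto simp: disjoint_family_on_def)
  moreover have "(\<Union>z. {\<omega> \<in> space M. h \<omega> = z \<and> P \<omega>}) = {\<omega> \<in> space M. P \<omega>}"
    by auto
  ultimately show ?thesis by simp
qed

lemma prob_card_gen_eq_maxdeg_le:
  "measure (GW_offspring p) {\<omega>. card (gen \<omega> n) = z \<and> maxdeg \<omega> n \<le> r}
   = measure (GW_offspring p) {\<omega>. card (gen \<omega> n) = z} * measure p {..r} ^ z"
proof -
  interpret prob_space "GW_offspring p" by (rule prob_space_GW_offspring)
  let ?F = "measure p {..r}"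
  let ?Q = "\<lambda>S \<omega>. card S = z \<and> (\<forall>v\<in>S. \<omega> v \<le> r)"
  have sets: "{\<omega>. ?Q S \<omega>} \<in> sets (GW_offspring p)" if "S \<in> gen_values n" for S
    using that sets_GW_offspring_coords[of S "\<lambda>_ x. x \<le> r" p]
    by (cases "card S = z") (auto simp: gen_values_def)
  have slice: "emeasure (GW_offspring p) ({\<omega>. gen \<omega> n = S} \<inter> {\<omega>. ?Q S \<omega>})
      = ennreal (?F ^ z) * emeasure (GW_offspring p) ({\<omega>. gen \<omega> n = S} \<inter> {\<omega>. card S = z})"
    if "S \<in> gen_values n" for S
  proof (cases "card S = z")
    case True
    have "{\<omega>. ?Q S \<omega>} = {\<omega>. \<forall>v\<in>S. \<omega> v \<in> {..r}}" using True by auto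
    then show ?thesis
      using measure_gen_eq_coords_in[of S n p "\<lambda>_. {..r}"] that True
      by (simp add: gen_values_def emeasure_eq_measure
          ennreal_mult mult.commute)
  qed simp
  have "emeasure (GW_offspring p) {\<omega>. card (gen \<omega> n) = z \<and> maxdeg \<omega> n \<le> r}
     = (\<integral>\<^sup>+S. emeasure (GW_offspring p) ({\<omega>. gen \<omega> n = S} \<inter> {\<omega>. ?Q S \<omega>}) \<partial>count_space (gen_values n))"
    unfolding maxdeg_le_iff by (rule emeasure_GW_offspring_gen_pred[where Q = ?Q, OF sets])
  also have "\<dots> = (\<integral>\<^sup>+S. ennreal (?F ^ z) *
      emeasure (GW_offspring p) ({\<omega>. gen \<omega> n = S} \<inter> {\<omega>. card S = z}) \<partial>count_space (gen_values n))"
    by (rule nn_integral_cong) (simp only: space_count_space slice)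
  also have "\<dots> = ennreal (?F ^ z) *
      (\<integral>\<^sup>+S. emeasure (GW_offspring p) ({\<omega>. gen \<omega> n = S} \<inter> {\<omega>. card S = z}) \<partial>count_space (gen_values n))"
    by (rule nn_integral_cmult) simp
  also have "\<dots> = ennreal (?F ^ z) * emeasure (GW_offspring p) {\<omega>. card (gen \<omega> n) = z}"
    by (subst emeasure_GW_offspring_gen_pred[where Q = "\<lambda>S \<omega>. card S = z"]) simp_all
  finally show ?thesis
    by (simp add: emeasure_eq_measure ennreal_mult'[symmetric] mult.commute)
qed

lemma sums_prob_maxdeg_le:
  "(\<lambda>z. measure (GW_offspring p) {\<omega>. card (gen \<omega> n) = z} * measure p {..r} ^ z)
     sums measure (GW_offspring p) {\<omega>. maxdeg \<omega> n \<le> r}"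
proof -
  interpret prob_space "GW_offspring p" by (rule prob_space_GW_offspring)
  have "{\<omega>. card (gen \<omega> n) = z \<and> maxdeg \<omega> n \<le> r} \<in> events" for z
    using sets.Int[OF sets_GW_offspring_card_gen_eq sets_GW_offspring_maxdeg_le]
    by (simp add: Collect_conj_eq)
  then show ?thesis
    using sums_prob_nat_partition[where h = "\<lambda>\<omega>. card (gen \<omega> n)" and P = "\<lambda>\<omega>. maxdeg \<omega> n \<le> r"]
    by (simp add: prob_card_gen_eq_maxdeg_le)
qed

lemma sums_prob_card_gen: "(\<lambda>z. measure (GW_offspring p) {\<omega>. card (gen \<omega> n) = z}) sums 1"
proof -
  interpret prob_space "GW_offspring p" by (rule prob_space_GW_offspring)
  show ?thesis
    using sums_prob_nat_partition[where h = "\<lambda>\<omega>. card (gen \<omega> n)" and P = "\<lambda>_. True"] prob_space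
    by (simp add: sets_GW_offspring_card_gen_eq)
qed

lemma sums_prob_maxdeg_eq:
  assumes "r \<ge> 1"
  shows "(\<lambda>z. measure (GW_offspring p) {\<omega>. card (gen \<omega> n) = z} *
              (measure p {..r} ^ z - measure p {..r - 1} ^ z))
         sums measure (GW_offspring p) {\<omega>. maxdeg \<omega> n = r}"
proof -
  interpret prob_space "GW_offspring p" by (rule prob_space_GW_offspring)
  have "{\<omega>. maxdeg \<omega> n = r} = {\<omega>. maxdeg \<omega> n \<le> r} - {\<omega>. maxdeg \<omega> n \<le> r - 1}"
    using assms by auto
  moreover have "prob ({\<omega>. maxdeg \<omega> n \<le> r} - {\<omega>. maxdeg \<omega> n \<le> r - 1})
      = prob {\<omega>. maxdeg \<omega> n \<le> r} - prob {\<omega>. maxdeg \<omega> n \<le> r - 1}"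
    by (intro finite_measure_Diff sets_GW_offspring_maxdeg_le) auto
  ultimately have "prob {\<omega>. maxdeg \<omega> n = r} = prob {\<omega>. maxdeg \<omega> n \<le> r} - prob {\<omega>. maxdeg \<omega> n \<le> r - 1}"
    by simp
  then show ?thesis
    using sums_diff[OF sums_prob_maxdeg_le[of p n r] sums_prob_maxdeg_le[of p n "r - 1"]]
    by (simp add: right_diff_distrib)
qed

lemma sums_prob_maxdeg_gt:
  "(\<lambda>z. measure (GW_offspring p) {\<omega>. card (gen \<omega> n) = z} * (1 - measure p {..r} ^ z))
     sums measure (GW_offspring p) {\<omega>. maxdeg \<omega> n > r}"
proof -
  interpret prob_space "GW_offspring p" by (rule prob_space_GW_offspring)
  have "{\<omega>. maxdeg \<omega> n > r} = space (GW_offspring p) - {\<omega>. maxdeg \<omega> n \<le> r}"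
    by auto
  moreover have "prob (space (GW_offspring p) - {\<omega>. maxdeg \<omega> n \<le> r}) = 1 - prob {\<omega>. maxdeg \<omega> n \<le> r}"
    by (rule prob_compl[OF sets_GW_offspring_maxdeg_le])
  ultimately have "prob {\<omega>. maxdeg \<omega> n > r} = 1 - prob {\<omega>. maxdeg \<omega> n \<le> r}"
    by simp
  then show ?thesis
    using sums_diff[OF sums_prob_card_gen[of p n] sums_prob_maxdeg_le[of p n r]]
    by (simp add: right_diff_distrib)
qed

section \<open>Difference quotients of generating functions\<close>

definition power_diff_quot :: "nat \<Rightarrow> real \<Rightarrow> real \<Rightarrow> real" where
  "power_diff_quot z x y = (\<Sum>i<z. y ^ (z - Suc i) * x ^ i)"

lemma power_diff_eq_mult_quot: "x ^ z - y ^ z = (x - y) * power_diff_quot z x y"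
  unfolding power_diff_quot_def by (rule power_diff_sumr2)

lemma power_diff_quot_nonneg: "0 \<le> x \<Longrightarrow> 0 \<le> y \<Longrightarrow> 0 \<le> power_diff_quot z x y"
  unfolding power_diff_quot_def by (intro sum_nonneg) auto

lemma power_diff_quot_le:
  assumes "0 \<le> x" "x \<le> 1" "0 \<le> y" "y \<le> 1"
  shows "power_diff_quot z x y \<le> real z"
proof -
  have "power_diff_quot z x y \<le> (\<Sum>i<z. 1)"
    unfolding power_diff_quot_def using assms by (intro sum_mono mult_le_one power_le_one) auto
  then show ?thesis by simp
qed

lemma power_diff_quot_tendsto:
  assumes "(X \<longlongrightarrow> 1) F" "(Y \<longlongrightarrow> 1) F"
  shows "((\<lambda>t. power_diff_quot z (X t) (Y t)) \<longlongrightarrow> real z) F"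
proof -
  have "((\<lambda>t. \<Sum>i<z. Y t ^ (z - Suc i) * X t ^ i) \<longlongrightarrow> (\<Sum>i<z. (1::real) ^ (z - Suc i) * 1 ^ i)) F"
    by (intro tendsto_sum tendsto_mult tendsto_power assms)
  then show ?thesis by (simp add: power_diff_quot_def)
qed

lemma sums_power_diff_le:
  fixes a :: "nat \<Rightarrow> real"
  assumes a: "\<And>z. 0 \<le> a z" and m: "(\<lambda>z. real z * a z) sums m"
    and xy: "0 \<le> y" "y \<le> x" "x \<le> 1"
    and D: "(\<lambda>z. a z * (x ^ z - y ^ z)) sums D"
  shows "D \<le> m * (x - y)"
proof (rule sums_le[OF _ D sums_mult2[OF m]])
  fix z
  have "a z * (x ^ z - y ^ z) = a z * (x - y) * power_diff_quot z x y"
    by (simp add: power_diff_eq_mult_quot)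
  also have "\<dots> \<le> a z * (x - y) * real z"
    using a xy by (intro mult_left_mono power_diff_quot_le) auto
  finally show "a z * (x ^ z - y ^ z) \<le> real z * a z * (x - y)"
    by (simp add: mult_ac)
qed

text \<open>Dominated convergence (Tannery's theorem), the series \<open>z * a z\<close> dominating termwise.\<close>

lemma sums_power_diff_quotient_tendsto:
  fixes a :: "nat \<Rightarrow> real" and X Y :: "'b \<Rightarrow> real"
  assumes a: "\<And>z. 0 \<le> a z" and m: "(\<lambda>z. real z * a z) sums m" and F: "F \<noteq> bot"
    and X: "(X \<longlongrightarrow> 1) F" "\<And>t. 0 \<le> X t" "\<And>t. X t \<le> 1"
    and Y: "(Y \<longlongrightarrow> 1) F" "\<And>t. 0 \<le> Y t" "\<And>t. Y t \<le> 1"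
    and D: "eventually (\<lambda>t. X t \<noteq> Y t \<and> (\<lambda>z. a z * (X t ^ z - Y t ^ z)) sums D t) F"
  shows "((\<lambda>t. D t / (X t - Y t)) \<longlongrightarrow> m) F"
proof -
  define A where "A z t = a z * power_diff_quot z (X t) (Y t)" for z t
  have am: "(\<lambda>z. a z * real z) sums m"
    using m by (simp add: mult.commute)
  have lim: "((\<lambda>t. A z t) \<longlongrightarrow> a z * real z) F" for z
    unfolding A_def by (intro tendsto_mult tendsto_const power_diff_quot_tendsto X Y)
  have bound: "eventually (\<lambda>(z, t). norm (A z t) \<le> a z * real z) (at_top \<times>\<^sub>F F)"
    using a X Y
    by (intro always_eventually)
       (auto simp: A_def abs_mult power_diff_quot_nonneg intro!: mult_left_mono power_diff_quot_le)
  have sum_lim: "((\<lambda>t. \<Sum>z. A z t) \<longlongrightarrow> m) F"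
    using tannerys_theorem[OF lim bound sums_summable[OF am] F] sums_unique[OF am] by simp
  have "eventually (\<lambda>t. (\<Sum>z. A z t) = D t / (X t - Y t)) F"
    using D
  proof eventually_elim
    case (elim t)
    then have "(\<lambda>z. a z * (X t ^ z - Y t ^ z) / (X t - Y t)) sums (D t / (X t - Y t))"
      by (intro sums_divide) simp
    moreover have "a z * (X t ^ z - Y t ^ z) / (X t - Y t) = A z t" for z
      using elim by (simp add: A_def power_diff_eq_mult_quot)
    ultimately show ?case by (simp add: sums_iff)
  qed
  from tendsto_cong[OF this] sum_lim show ?thesis
    by simp
qed

section \<open>Asymptotics of the maximal out-degree\<close>

lemma pmf_eq_cdf_diff:
  fixes p :: "nat pmf"
  assumes "r \<ge> 1"
  shows "pmf p r = measure p {..r} - measure p {..r - 1}"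
proof -
  obtain s where "r = Suc s" using assms by (cases r) auto
  then show ?thesis by (simp add: measure_measure_pmf_finite)
qed

lemma cdf_tendsto_1:
  fixes p :: "nat pmf"
  shows "(\<lambda>r. measure p {..r}) \<longlonglongrightarrow> 1"
proof -
  have "(\<lambda>r. measure p {..r}) \<longlonglongrightarrow> measure p (\<Union>r. {..r::nat})"
    by (rule measure_pmf.finite_Lim_measure_incseq) (auto simp: incseq_def)
  moreover have "(\<Union>r. {..r::nat}) = UNIV" by auto
  ultimately show ?thesis by simp
qed

lemma Fbar_eq: "Fbar p r = 1 - measure p {..r}"
proof -
  have "UNIV - {..r} = {r<..}" by auto
  then show ?thesis
    unfolding Fbar_def using measure_pmf.prob_compl[of "{..r}" p] by simp
qed

lemma Fbar_pos:
  assumes "infinite {r. pmf p r > 0}"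
  shows "Fbar p r > 0"
proof -
  obtain k where k: "k > r" "pmf p k > 0"
    using assms finite_subset[of "{r. pmf p r > 0}" "{..r}"] by (force simp: not_less)
  have "pmf p k \<le> Fbar p r"
    unfolding Fbar_def measure_pmf_single[symmetric]
    using k by (intro measure_pmf.finite_measure_mono) auto
  with k show ?thesis by simp
qed

lemma inf_sequentially_principal_neq_bot:
  fixes A :: "nat set"
  assumes "infinite A"
  shows "inf sequentially (principal A) \<noteq> bot"
proof
  assume "inf sequentially (principal A) = bot"
  then have "eventually (\<lambda>_. False) (inf sequentially (principal A))"
    by simp
  then obtain N where "\<And>x. x \<ge> N \<Longrightarrow> x \<notin> A"
    unfolding eventually_inf_principal eventually_sequentially by auto
  then have "A \<subseteq> {..<N}" by (auto simp: not_le[symmetric])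
  with assms show False using finite_subset by blast
qed

lemma prob_maxdeg_eq_le:
  assumes mean: "summable (\<lambda>k. real k * pmf p k)" and r: "r \<ge> 1"
  shows "measure (GW_offspring p) {\<omega>. maxdeg \<omega> n = r} \<le> offspring_mean p ^ n * pmf p r"
proof -
  have "measure p {..r - 1} \<le> measure p {..r}"
    by (intro measure_pmf.finite_measure_mono) auto
  then show ?thesis
    using sums_power_diff_le[OF _ sums_card_gen_prob[OF mean] _ _ _ sums_prob_maxdeg_eq[OF r]]
    by (simp add: pmf_eq_cdf_diff[OF r])
qed

lemma prob_maxdeg_eq_over_pmf_tendsto:
  assumes mean: "summable (\<lambda>k. real k * pmf p k)" and unbounded: "infinite {r. pmf p r > 0}"
  shows "((\<lambda>r. measure (GW_offspring p) {\<omega>. maxdeg \<omega> n = r} / pmf p r) \<longlongrightarrow> offspring_mean p ^ n)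
           (inf sequentially (principal {r. pmf p r > 0}))"
proof -
  let ?F = "inf sequentially (principal {r. pmf p r > 0})"
  have cdf_pred: "(\<lambda>r. measure p {..r - 1}) \<longlonglongrightarrow> 1"
    using filterlim_compose[OF cdf_tendsto_1 filterlim_minus_const_nat_at_top[of 1]] by simp
  have cdf: "((\<lambda>r. measure p {..r}) \<longlongrightarrow> 1) ?F" "((\<lambda>r. measure p {..r - 1}) \<longlongrightarrow> 1) ?F"
    by (fact tendsto_mono[OF inf_le1 cdf_tendsto_1], fact tendsto_mono[OF inf_le1 cdf_pred])
  have ev: "eventually (\<lambda>r. r \<ge> 1 \<and> pmf p r > 0) ?F"
    unfolding eventually_inf_principal using eventually_ge_at_top[of 1] by eventually_elim simp
  have "eventually (\<lambda>r. measure p {..r} \<noteq> measure p {..r - 1} \<and>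
      (\<lambda>z. measure (GW_offspring p) {\<omega>. card (gen \<omega> n) = z} *
            (measure p {..r} ^ z - measure p {..r - 1} ^ z))
        sums measure (GW_offspring p) {\<omega>. maxdeg \<omega> n = r}) ?F"
    using ev
  proof eventually_elim
    case (elim r)
    then show ?case
      using pmf_eq_cdf_diff[of r p] sums_prob_maxdeg_eq[of r p n] by auto
  qed
  from sums_power_diff_quotient_tendsto[OF _ sums_card_gen_prob[OF mean]
      inf_sequentially_principal_neq_bot[OF unbounded] cdf(1) _ _ cdf(2) _ _ this]
  have lim: "((\<lambda>r. measure (GW_offspring p) {\<omega>. maxdeg \<omega> n = r} / (measure p {..r} - measure p {..r - 1}))
      \<longlongrightarrow> offspring_mean p ^ n) ?F"
    by simp
  have "eventually (\<lambda>r. measure (GW_offspring p) {\<omega>. maxdeg \<omega> n = r} /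
      (measure p {..r} - measure p {..r - 1}) = measure (GW_offspring p) {\<omega>. maxdeg \<omega> n = r} / pmf p r) ?F"
    using ev by eventually_elim (simp add: pmf_eq_cdf_diff)
  from tendsto_cong[OF this] lim show ?thesis
    by blast
qed

lemma prob_maxdeg_gt_over_Fbar_tendsto:
  assumes mean: "summable (\<lambda>k. real k * pmf p k)" and unbounded: "infinite {r. pmf p r > 0}"
  shows "(\<lambda>r. measure (GW_offspring p) {\<omega>. maxdeg \<omega> n > r} / Fbar p r) \<longlonglongrightarrow> offspring_mean p ^ n"
proof -
  have "1 \<noteq> measure p {..r} \<and>
      (\<lambda>z. measure (GW_offspring p) {\<omega>. card (gen \<omega> n) = z} * (1 ^ z - measure p {..r} ^ z))
        sums measure (GW_offspring p) {\<omega>. maxdeg \<omega> n > r}" for r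
    using Fbar_pos[OF unbounded, of r] by (simp add: Fbar_eq sums_prob_maxdeg_gt)
  from sums_power_diff_quotient_tendsto[OF _ sums_card_gen_prob[OF mean] trivial_limit_sequentially
      tendsto_const _ _ cdf_tendsto_1 _ _ always_eventually[OF allI[OF this]]]
  show ?thesis by (simp add: Fbar_eq)
qed

theorem proposition2p2:
  fixes p :: "nat pmf"
  assumes mean_finite: "summable (\<lambda>k. real k * pmf p k)"
    and mean_pos: "offspring_mean p > 0"
  shows "(\<forall>n r. r \<ge> 1 \<longrightarrow>
            measure (GW_offspring p) {xi \<in> space (GW_offspring p). maxdeg xi n = r}
              \<le> offspring_mean p ^ n * pmf p r)
       \<and> (infinite {r. pmf p r > 0} \<longrightarrow>
            (\<forall>n.
              ((\<lambda>r. measure (GW_offspring p) {xi \<in> space (GW_offspring p). maxdeg xi n = r} / pmf p r)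
                 \<longlongrightarrow> offspring_mean p ^ n) (inf sequentially (principal {r. pmf p r > 0}))
            \<and> (\<lambda>r. measure (GW_offspring p) {xi \<in> space (GW_offspring p). maxdeg xi n > r})
                 \<sim>[sequentially] (\<lambda>r. offspring_mean p ^ n * Fbar p r)))"
proof (intro conjI allI impI)
  fix n r :: nat
  assume "r \<ge> 1"
  then show "measure (GW_offspring p) {xi \<in> space (GW_offspring p). maxdeg xi n = r}
      \<le> offspring_mean p ^ n * pmf p r"
    using prob_maxdeg_eq_le[OF mean_finite] by simp
next
  fix n
  assume unbounded: "infinite {r. pmf p r > 0}"
  then show "((\<lambda>r. measure (GW_offspring p) {xi \<in> space (GW_offspring p). maxdeg xi n = r} / pmf p r)
      \<longlongrightarrow> offspring_mean p ^ n) (inf sequentially (principal {r. pmf p r > 0}))"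
    using prob_maxdeg_eq_over_pmf_tendsto[OF mean_finite] by simp
  have "offspring_mean p ^ n \<noteq> 0"
    using mean_pos by simp
  with unbounded show "(\<lambda>r. measure (GW_offspring p) {xi \<in> space (GW_offspring p). maxdeg xi n > r})
      \<sim>[sequentially] (\<lambda>r. offspring_mean p ^ n * Fbar p r)"
    using asymp_equivI'_const[OF prob_maxdeg_gt_over_Fbar_tendsto[OF mean_finite]] by simp
qed

end
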